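(* Every dense subgroup of $\mathrm{SL}_2(\mathbb{Q}_p)$ contains two elements which generate a dense subgroup of $\mathrm{SL}_2(\mathbb{Q}_p)$.
   Context: $\mathrm{SL}_2(\mathbb{Q}_p)$ carries the subspace topology from $\mathbb{Q}_p^4$; $p$ is any prime. *)

theory Defs
  imports "HOL-Analysis.Analysis"
begin

definition padic_abs_rat :: "nat \<Rightarrow> rat \<Rightarrow> real" where
  "padic_abs_rat p q =
     (if q = 0 then 0
      else (case quotient_of q of (a, b) \<Rightarrow>
              real p ^ multiplicity (int p) b / real p ^ multiplicity (int p) a))"

text \<open>This characterises Q_p (the completion of Q w.r.t. the p-adic absolute value) up to
  isometric field isomorphism.\<close>
definition is_padic_field :: "nat \<Rightarrow> ('a::{field_char_0, metric_space} \<Rightarrow> real) \<Rightarrow> bool" where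
  "is_padic_field p N \<longleftrightarrow>
     (\<forall>x. 0 \<le> N x) \<and> (\<forall>x. N x = 0 \<longleftrightarrow> x = 0) \<and>
     (\<forall>x y. N (x * y) = N x * N y) \<and>
     (\<forall>x y. N (x + y) \<le> max (N x) (N y)) \<and>
     (\<forall>x y. dist x y = N (x - y)) \<and>
     (\<forall>q. N (of_rat q) = padic_abs_rat p q) \<and>
     closure (range (of_rat :: rat \<Rightarrow> 'a)) = UNIV \<and>
     complete (UNIV :: 'a set)"

text \<open>SL_2(K), as a subset of K^{2x2} = K^4 (product topology).\<close>
definition SL2 :: "('a::field ^ 2 ^ 2) set" where
  "SL2 = {A. det A = 1}"

definition is_subgroup_SL2 :: "('a::field ^ 2 ^ 2) set \<Rightarrow> bool" where
  "is_subgroup_SL2 H \<longleftrightarrow>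
     H \<subseteq> SL2 \<and> mat 1 \<in> H \<and> (\<forall>A\<in>H. \<forall>B\<in>H. A ** B \<in> H) \<and>
     (\<forall>A\<in>H. \<exists>B\<in>H. A ** B = mat 1)"

definition subgroup_generated_SL2 :: "('a::field ^ 2 ^ 2) set \<Rightarrow> ('a ^ 2 ^ 2) set" where
  "subgroup_generated_SL2 S = \<Inter>{K. is_subgroup_SL2 K \<and> S \<subseteq> K}"

end

(*
  Choose a in H close to diag(1/p, p). Its characteristic polynomial has a root lam with |lam| = p
  (a contraction argument for x \<mapsto> tr a - 1/x), so a = g diag(lam, 1/lam) g^-1. Then choose b in H
  such that C = g^-1 b g is within p^-2 of 1 with both off-diagonal entries of absolute value exactly
  p^-2. Raising to the p-th power divides the size of C - 1 by p and keeps the off-diagonal entries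
  sharp, and conjugating C^(p^(2n)) by diag(lam, 1/lam)^n restores the upper right entry to size p^-2
  while the other entries converge to those of 1. By compactness of the unit ball, the closure of
  the group generated by a and b contains g u(s) g^-1 for an upper unipotent u(s) with s \<noteq> 0. The
  set of such s is closed, closed under addition and under multiplication by lam^2, hence all of
  Q_p. Swapping the roles of a and a^-1 gives the lower unipotents, and the two families generate SL_2.
*)
theory Submission
  imports Defs
begin

section \<open>Explicit 2 by 2 matrices\<close>

definition mat2 :: "'a \<Rightarrow> 'a \<Rightarrow> 'a \<Rightarrow> 'a \<Rightarrow> 'a^2^2" where
  "mat2 a b c d = (\<chi> i j. if i = 1 then (if j = 1 then a else b) else (if j = 1 then c else d))"

lemma mat2_nth [simp]:
  "mat2 a b c d $1$1 = a" "mat2 a b c d $1$2 = b" "mat2 a b c d $2$1 = c" "mat2 a b c d $2$2 = d"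
  by (simp_all add: mat2_def)

lemma mat2_entries: "mat2 (A$1$1) (A$1$2) (A$2$1) (A$2$2) = A"
  by (simp add: mat2_def vec_eq_iff forall_2)

lemma mat2_eq_iff: "mat2 a b c d = mat2 a' b' c' d' \<longleftrightarrow> a = a' \<and> b = b' \<and> c = c' \<and> d = d'"
  by (metis mat2_nth)

lemma matrix_mult_nth_2: "((A::'a::semiring_1^2^2) ** B) $ i $ j = A$i$1 * B$1$j + A$i$2 * B$2$j"
  by (simp add: matrix_matrix_mult_def sum_2)

lemma mat2_mult:
  fixes a :: "'a::semiring_1"
  shows "mat2 a b c d ** mat2 a' b' c' d'
    = mat2 (a*a' + b*c') (a*b' + b*d') (c*a' + d*c') (c*b' + d*d')"
  by (simp add: vec_eq_iff forall_2 matrix_mult_nth_2)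

lemma mat_1_eq_mat2: "(mat 1 :: 'a::zero_neq_one^2^2) = mat2 1 0 0 1"
  by (simp add: vec_eq_iff forall_2 mat_def)

lemma det_mat2: "det (mat2 a b c d) = a*d - b*c"
  by (simp add: det_2)

lemma matrix_diff_rdistrib: "((A::'a::ring_1^'n^'m) - B) ** C = A ** C - B ** C"
  by (simp add: matrix_matrix_mult_def vec_eq_iff sum_subtractf algebra_simps)

lemma matrix_diff_ldistrib: "(C::'a::ring_1^'n^'m) ** (A - B) = C ** A - C ** B"
  by (simp add: matrix_matrix_mult_def vec_eq_iff sum_subtractf algebra_simps)

lemma mat2_inverse_right:
  fixes x :: "'a::field"
  assumes "x * y - u * v = D" and "D \<noteq> 0"
  shows "mat2 x u v y ** mat2 (y/D) (-u/D) (-v/D) (x/D) = mat 1"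
  using assms by (simp add: mat2_mult mat_1_eq_mat2 field_simps)

lemma SL2_lower_upper_factorization:
  fixes A :: "'a::field^2^2"
  assumes "det A = 1"
  obtains e a b c where "A = mat2 1 0 e 1 ** mat2 1 a 0 1 ** mat2 1 0 b 1 ** mat2 1 c 0 1"
proof -
  define x y z w where "x = A$1$1" and "y = A$1$2" and "z = A$2$1" and "w = A$2$2"
  have A: "A = mat2 x y z w" and det: "x * w - y * z = 1"
    using mat2_entries[of A] assms by (simp_all add: x_def y_def z_def w_def det_2)
  show ?thesis
  proof (cases "z = 0")
    case False
    have "A = mat2 1 0 0 1 ** mat2 1 ((x - 1) / z) 0 1 ** mat2 1 0 z 1 ** mat2 1 ((w - 1) / z) 0 1"
      using False det unfolding A by (simp add: mat2_mult field_simps; simp add: algebra_simps)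
    thus ?thesis by (rule that)
  next
    case True
    hence "x \<noteq> 0" using det by auto
    moreover have "w = 1 / x" using True det \<open>x \<noteq> 0\<close> by (simp add: eq_divide_eq mult.commute)
    ultimately have "A = mat2 1 0 (-1) 1 ** mat2 1 ((x - 1) / x) 0 1 ** mat2 1 0 x 1
        ** mat2 1 ((y + w - 1) / x) 0 1"
      using True unfolding A by (simp add: mat2_mult field_simps; simp add: algebra_simps)
    thus ?thesis by (rule that)
  qed
qed

lemma mat2_swap_conj: "mat2 0 1 1 0 ** mat2 x y z w ** mat2 0 1 1 0 = mat2 w z y x"
  for x :: "'a::semiring_1"
  by (simp add: mat2_mult)

lemma mat2_swap_conj_entries:
  "mat2 0 1 1 0 ** A ** mat2 0 1 1 0 = mat2 (A$2$2) (A$2$1) (A$1$2) (A$1$1)"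
  for A :: "'a::semiring_1^2^2"
  by (metis mat2_entries mat2_swap_conj)

lemma mat2_swap_square: "mat2 0 1 1 0 ** mat2 0 1 1 0 = (mat 1 :: 'a::semiring_1^2^2)"
  by (simp add: mat2_mult mat_1_eq_mat2)

lemma mat2_diagonal_conj:
  "mat2 l 0 0 m ** A ** mat2 m 0 0 l = mat2 (l * m * A$1$1) (l * l * A$1$2) (m * m * A$2$1) (m * l * A$2$2)"
  for l :: "'a::comm_semiring_1"
  by (subst (2) mat2_entries[symmetric]) (simp add: mat2_mult algebra_simps)

lemma mat2_eigenvector_columns:
  fixes a :: "'a::comm_ring_1"
  assumes "a * d - b * c = 1" and "lam + mu = a + d" and "lam * mu = 1"
  shows "mat2 a b c d ** mat2 (lam - d) b c (mu - a) = mat2 (lam - d) b c (mu - a) ** mat2 lam 0 0 mu"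
proof -
  have d_eq: "d = lam + mu - a" and bc: "b * c = a * d - 1"
    using assms(1,2) by (simp_all add: algebra_simps)
  show ?thesis unfolding mat2_mult mat2_eq_iff
    using assms(3) by (simp add: bc algebra_simps) (simp add: d_eq algebra_simps power2_eq_square)
qed

lemma tendsto_mat2:
  assumes "(x \<longlongrightarrow> a) F" "(y \<longlongrightarrow> b) F" "(z \<longlongrightarrow> c) F" "(w \<longlongrightarrow> d) F"
  shows "((\<lambda>n. mat2 (x n) (y n) (z n) (w n)) \<longlongrightarrow> mat2 a b c d) F"
proof (rule vec_tendstoI, rule vec_tendstoI)
  fix i j :: 2
  show "((\<lambda>n. mat2 (x n) (y n) (z n) (w n) $ i $ j) \<longlongrightarrow> mat2 a b c d $ i $ j) F"
    using exhaust_2[of i] exhaust_2[of j] assms by auto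
qed

definition mat_scale :: "'a::times \<Rightarrow> 'a^'n^'m \<Rightarrow> 'a^'n^'m" where
  "mat_scale c A = (\<chi> i j. c * A$i$j)"

lemma mat_scale_nth [simp]: "mat_scale c A $ i $ j = c * A$i$j"
  by (simp add: mat_scale_def)

fun mat_pow :: "'a::semiring_1^'n^'n \<Rightarrow> nat \<Rightarrow> 'a^'n^'n" where
  "mat_pow A 0 = mat 1"
| "mat_pow A (Suc n) = mat_pow A n ** A"

lemma mat_pow_add: "mat_pow A (m + n) = mat_pow A m ** mat_pow A n"
  by (induction n) (simp_all add: matrix_mul_assoc)

lemma mat_pow_mult: "mat_pow A (m * n) = mat_pow (mat_pow A m) n"
proof (induction n)
  case (Suc n)
  have "mat_pow A (m * Suc n) = mat_pow A (m * n) ** mat_pow A m"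
    by (simp add: mat_pow_add[symmetric] add.commute)
  thus ?case using Suc by simp
qed simp

lemma mat_pow_mat2_diagonal: "mat_pow (mat2 l 0 0 m) n = mat2 (l ^ n) 0 0 (m ^ n)"
  for l :: "'a::comm_semiring_1"
  by (induction n) (simp_all add: mat_1_eq_mat2 mat2_mult mult.commute)

lemma mat_pow_closed:
  assumes "\<And>X Y. X \<in> G \<Longrightarrow> Y \<in> G \<Longrightarrow> X ** Y \<in> G" and "mat 1 \<in> G" and "A \<in> G"
  shows "mat_pow A n \<in> G"
  using assms by (induction n) auto

lemma conj_mult:
  assumes "gi ** g = mat 1"
  shows "(g ** X ** gi) ** (g ** Y ** gi) = g ** (X ** Y) ** gi"
proof -
  have "(g ** X ** gi) ** (g ** Y ** gi) = g ** X ** (gi ** g) ** Y ** gi"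
    by (simp add: matrix_mul_assoc)
  thus ?thesis using assms by (simp add: matrix_mul_assoc)
qed

lemma conj_cancel:
  assumes "g ** gi = mat 1"
  shows "g ** (gi ** Z ** g) ** gi = Z"
proof -
  have "g ** (gi ** Z ** g) ** gi = (g ** gi) ** Z ** (g ** gi)" by (simp add: matrix_mul_assoc)
  thus ?thesis using assms by simp
qed

lemma mat_pow_conj:
  assumes "gi ** g = mat 1" and "g ** gi = mat 1"
  shows "mat_pow (g ** A ** gi) n = g ** mat_pow A n ** gi"
  by (induction n) (simp_all add: assms conj_mult)

lemma subgroup_generated_SL2_mult:
  "X \<in> subgroup_generated_SL2 S \<Longrightarrow> Y \<in> subgroup_generated_SL2 S
    \<Longrightarrow> X ** Y \<in> subgroup_generated_SL2 S"
  unfolding subgroup_generated_SL2_def is_subgroup_SL2_def by blast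

lemma subgroup_generated_SL2_one: "mat 1 \<in> subgroup_generated_SL2 S"
  unfolding subgroup_generated_SL2_def is_subgroup_SL2_def by blast

lemma subgroup_generated_SL2_gen: "x \<in> S \<Longrightarrow> x \<in> subgroup_generated_SL2 S"
  unfolding subgroup_generated_SL2_def by blast

lemma subgroup_generated_SL2_inverse:
  assumes "x \<in> S" and "xi ** x = (mat 1 :: 'a::field^2^2)"
  shows "xi \<in> subgroup_generated_SL2 S"
  unfolding subgroup_generated_SL2_def
proof (intro InterI, clarify)
  fix K assume "is_subgroup_SL2 K" "S \<subseteq> K"
  then obtain B where "B \<in> K" "x ** B = mat 1"
    using assms(1) unfolding is_subgroup_SL2_def by blast
  moreover have "xi = B"
    using assms(2) \<open>x ** B = mat 1\<close> by (metis matrix_mul_assoc matrix_mul_lid matrix_mul_rid)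
  ultimately show "xi \<in> K" by simp
qed

section \<open>Non-archimedean absolute values\<close>

locale nonarch_abs =
  fixes N :: "'a::{field, metric_space} \<Rightarrow> real"
  assumes N_nonneg: "0 \<le> N x"
    and N_eq_0_iff [simp]: "N x = 0 \<longleftrightarrow> x = 0"
    and N_mult: "N (x * y) = N x * N y"
    and N_add_le_max: "N (x + y) \<le> max (N x) (N y)"
    and dist_eq_N: "dist x y = N (x - y)"
begin

lemma N_pos: "x \<noteq> 0 \<Longrightarrow> 0 < N x"
  using N_nonneg[of x] by (simp add: order_le_less)

lemma N_0 [simp]: "N 0 = 0"
  by simp

lemma N_1 [simp]: "N 1 = 1"
  using N_mult[of 1 1] by simp

lemma N_minus [simp]: "N (- x) = N x"
proof -
  have "N (-1) ^ 2 = 1" using N_mult[of "-1" "-1"] by (simp add: power2_eq_square)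
  hence "N (-1) = 1" using N_nonneg[of "-1"] by (simp add: power2_eq_1_iff)
  thus ?thesis using N_mult[of "-1" x] by simp
qed

lemma N_minus_commute: "N (x - y) = N (y - x)"
  by (metis N_minus minus_diff_eq)

lemma N_add_le: "N (x + y) \<le> N x + N y"
  using N_add_le_max[of x y] N_nonneg[of x] N_nonneg[of y] by linarith

lemma N_inverse: "N (inverse x) = inverse (N x)"
proof (cases "x = 0")
  case False
  then have "N x * N (inverse x) = 1" using N_mult[of x "inverse x"] by simp
  thus ?thesis by (metis inverse_unique)
qed simp

lemma N_divide: "N (x / y) = N x / N y"
  by (simp add: divide_inverse N_mult N_inverse)

lemma N_power: "N (x ^ n) = N x ^ n"
  by (induction n) (simp_all add: N_mult)

lemma N_add_eq_right: "N x < N y \<Longrightarrow> N (x + y) = N y"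
  using N_add_le_max[of x y] N_add_le_max[of "x + y" "- x"] by (simp add: max_def split: if_splits)

lemma N_add_eq_left: "N y < N x \<Longrightarrow> N (x + y) = N x"
  using N_add_eq_right[of y x] by (simp add: add.commute)

lemma tendsto_iff_N: "(f \<longlongrightarrow> l) F \<longleftrightarrow> ((\<lambda>n. N (f n - l)) \<longlongrightarrow> 0) F"
  by (subst tendsto_dist_iff) (simp add: dist_eq_N)

lemma tendsto_N_le:
  assumes "\<And>n. N (f n - l) \<le> g n" and "(g \<longlongrightarrow> 0) F"
  shows "(f \<longlongrightarrow> l) F"
  unfolding tendsto_iff_N
  by (rule tendsto_sandwich[of "\<lambda>_. 0" _ F g]) (use assms N_nonneg in auto)

lemma tendsto_N: "(f \<longlongrightarrow> l) F \<Longrightarrow> ((\<lambda>n. N (f n)) \<longlongrightarrow> N l) F"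
  using tendsto_dist[of f l F "\<lambda>_. 0" 0] by (simp add: dist_eq_N)

lemma tendsto_add_N:
  fixes f g :: "'b \<Rightarrow> 'a"
  assumes "(f \<longlongrightarrow> l) F" and "(g \<longlongrightarrow> m) F"
  shows "((\<lambda>n. f n + g n) \<longlongrightarrow> l + m) F"
proof (rule tendsto_N_le)
  show "N (f n + g n - (l + m)) \<le> N (f n - l) + N (g n - m)" for n
    using N_add_le[of "f n - l" "g n - m"] by (simp add: algebra_simps)
  show "((\<lambda>n. N (f n - l) + N (g n - m)) \<longlongrightarrow> 0) F"
    using assms unfolding tendsto_iff_N by (rule tendsto_add_zero)
qed

lemma tendsto_mult_N:
  fixes f g :: "'b \<Rightarrow> 'a"
  assumes "(f \<longlongrightarrow> l) F" and "(g \<longlongrightarrow> m) F"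
  shows "((\<lambda>n. f n * g n) \<longlongrightarrow> l * m) F"
proof (rule tendsto_N_le)
  fix n
  have "f n * g n - l * m = f n * (g n - m) + (f n - l) * m" by (simp add: algebra_simps)
  hence "N (f n * g n - l * m) \<le> N (f n) * N (g n - m) + N (f n - l) * N m"
    by (metis N_add_le N_mult)
  moreover have "N (f n) \<le> N (f n - l) + N l" using N_add_le[of "f n - l" l] by simp
  hence "N (f n) * N (g n - m) \<le> (N (f n - l) + N l) * N (g n - m)"
    using N_nonneg by (rule mult_right_mono)
  ultimately show "N (f n * g n - l * m) \<le> (N (f n - l) + N l) * N (g n - m) + N (f n - l) * N m"
    by linarith
next
  have "((\<lambda>n. N (f n - l)) \<longlongrightarrow> 0) F" and "((\<lambda>n. N (g n - m)) \<longlongrightarrow> 0) F"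
    using assms unfolding tendsto_iff_N by auto
  hence "((\<lambda>n. (N (f n - l) + N l) * N (g n - m) + N (f n - l) * N m)
      \<longlongrightarrow> (0 + N l) * 0 + 0 * N m) F"
    by (intro tendsto_add tendsto_mult tendsto_const)
  thus "((\<lambda>n. (N (f n - l) + N l) * N (g n - m) + N (f n - l) * N m) \<longlongrightarrow> 0) F"
    by simp
qed

definition mnorm :: "'a^2^2 \<Rightarrow> real" where
  "mnorm A = max (max (N (A$1$1)) (N (A$1$2))) (max (N (A$2$1)) (N (A$2$2)))"

lemma N_nth_le_mnorm: "N (A$i$j) \<le> mnorm A"
  unfolding mnorm_def using exhaust_2[of i] exhaust_2[of j] by auto

lemma mnorm_nonneg: "0 \<le> mnorm A"
  using N_nth_le_mnorm[of A 1 1] N_nonneg[of "A$1$1"] by linarith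

lemma mnorm_le: "(\<And>i j. N (A$i$j) \<le> c) \<Longrightarrow> mnorm A \<le> c"
  unfolding mnorm_def by auto

lemma mnorm_add_le: "mnorm (A + B) \<le> max (mnorm A) (mnorm B)"
proof (rule mnorm_le)
  fix i j
  show "N ((A + B)$i$j) \<le> max (mnorm A) (mnorm B)"
    using N_add_le_max[of "A$i$j" "B$i$j"] N_nth_le_mnorm[of A i j] N_nth_le_mnorm[of B i j]
    by simp
qed

lemma mnorm_mult_le: "mnorm (A ** B) \<le> mnorm A * mnorm B"
proof (rule mnorm_le)
  fix i j
  have "N ((A ** B)$i$j) \<le> max (N (A$i$1 * B$1$j)) (N (A$i$2 * B$2$j))"
    unfolding matrix_mult_nth_2 by (rule N_add_le_max)
  also have "\<dots> \<le> mnorm A * mnorm B"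
    using N_nth_le_mnorm[of A] N_nth_le_mnorm[of B] N_nonneg by (simp add: N_mult mult_mono')
  finally show "N ((A ** B)$i$j) \<le> mnorm A * mnorm B" .
qed

lemma mnorm_le_dist: "mnorm (X - Y) \<le> dist X Y"
proof (rule mnorm_le)
  fix i j
  have "N ((X - Y)$i$j) = dist (X$i$j) (Y$i$j)" by (simp add: dist_eq_N)
  also have "\<dots> \<le> dist (X$i) (Y$i)" by (rule dist_vec_nth_le)
  also have "\<dots> \<le> dist X Y" by (rule dist_vec_nth_le)
  finally show "N ((X - Y)$i$j) \<le> dist X Y" .
qed

lemma mnorm_mat2: "mnorm (mat2 a b c d) = max (max (N a) (N b)) (max (N c) (N d))"
  by (simp add: mnorm_def)

lemma mnorm_mat_1_le: "mnorm (mat 1) \<le> 1"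
  by (rule mnorm_le) (simp add: mat_def)

lemma mnorm_mat_pow_expansion:
  assumes M: "mnorm (M - mat 1) \<le> d" and "d \<le> 1"
  shows "mnorm (mat_pow M n - mat 1) \<le> d
    \<and> mnorm (mat_pow M n - mat 1 - mat_scale (of_nat n) (M - mat 1)) \<le> d * d"
proof (induction n)
  case 0
  have "mat_pow M 0 - mat 1 - mat_scale (of_nat 0) (M - mat 1) = 0"
    by (simp add: vec_eq_iff)
  moreover have "mnorm 0 = 0" unfolding mnorm_def by simp
  ultimately show ?case using M mnorm_nonneg[of "M - mat 1"] by simp
next
  case (Suc n)
  define Y where "Y = M - mat 1"
  define X where "X = mat_pow M n - mat 1"
  have d: "0 \<le> d" using M mnorm_nonneg[of "M - mat 1"] by linarith
  have X: "mnorm X \<le> d" and R: "mnorm (X - mat_scale (of_nat n) Y) \<le> d * d"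
    using Suc unfolding X_def Y_def by auto
  have Y: "mnorm Y \<le> d" using M unfolding Y_def .
  have XY: "mnorm (X ** Y) \<le> d * d"
    using mnorm_mult_le[of X Y] mult_mono[OF X Y d mnorm_nonneg] by linarith
  have "mat_pow M n = mat 1 + X" unfolding X_def by simp
  hence "mnorm (mat_pow M n) \<le> 1"
    using mnorm_add_le[of "mat 1" X] mnorm_mat_1_le X assms(2) by simp
  hence PY: "mnorm (mat_pow M n ** Y) \<le> d"
    using mnorm_mult_le[of "mat_pow M n" Y] mult_mono[OF _ Y zero_le_one mnorm_nonneg] by force
  have "mat_pow M (Suc n) - mat 1 = X + mat_pow M n ** Y"
    unfolding X_def Y_def by (simp add: matrix_diff_ldistrib)
  hence first: "mnorm (mat_pow M (Suc n) - mat 1) \<le> d"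
    using order_trans[OF mnorm_add_le max.boundedI[OF X PY]] by simp
  have "mat_scale (of_nat (Suc n)) Y = mat_scale (of_nat n) Y + Y"
    by (simp add: vec_eq_iff algebra_simps)
  moreover have "X ** Y = mat_pow M n ** M - mat_pow M n - Y"
    unfolding X_def Y_def by (simp add: matrix_diff_ldistrib matrix_diff_rdistrib)
  ultimately have "mat_pow M (Suc n) - mat 1 - mat_scale (of_nat (Suc n)) Y
      = (X - mat_scale (of_nat n) Y) + X ** Y"
    by (simp add: X_def algebra_simps)
  hence "mnorm (mat_pow M (Suc n) - mat 1 - mat_scale (of_nat (Suc n)) Y) \<le> d * d"
    using order_trans[OF mnorm_add_le max.boundedI[OF R XY]] by simp
  with first show ?case by (simp only: Y_def)
qed

lemma tendsto_matrix_mult_N: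
  fixes X Y :: "'b \<Rightarrow> 'a^2^2"
  assumes "(X \<longlongrightarrow> A) F" and "(Y \<longlongrightarrow> B) F"
  shows "((\<lambda>n. X n ** Y n) \<longlongrightarrow> A ** B) F"
proof (rule vec_tendstoI, rule vec_tendstoI)
  fix i j
  have "((\<lambda>n. X n $ k $ l) \<longlongrightarrow> A $ k $ l) F" "((\<lambda>n. Y n $ k $ l) \<longlongrightarrow> B $ k $ l) F" for k l
    using assms by (simp_all add: tendsto_vec_nth)
  thus "((\<lambda>n. (X n ** Y n) $ i $ j) \<longlongrightarrow> (A ** B) $ i $ j) F"
    unfolding matrix_mult_nth_2 by (intro tendsto_add_N tendsto_mult_N)
qed

lemma closure_matrix_mult_closed:
  fixes G :: "('a^2^2) set"
  assumes "\<And>X Y. X \<in> G \<Longrightarrow> Y \<in> G \<Longrightarrow> X ** Y \<in> G" and "A \<in> closure G" and "B \<in> closure G"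
  shows "A ** B \<in> closure G"
proof -
  obtain f where f: "\<forall>n. f n \<in> G" "f \<longlonglongrightarrow> A" using assms(2) closure_sequential by blast
  obtain h where h: "\<forall>n. h n \<in> G" "h \<longlonglongrightarrow> B" using assms(3) closure_sequential by blast
  have "(\<lambda>n. f n ** h n) \<longlonglongrightarrow> A ** B" by (intro tendsto_matrix_mult_N f h)
  moreover have "\<forall>n. f n ** h n \<in> G" using f h assms(1) by blast
  ultimately show ?thesis
    by (intro iffD2[OF closure_sequential] exI[of _ "\<lambda>n. f n ** h n"]) simp
qed

lemma SL2_subset_closure_if_conj_unipotents:
  fixes G :: "('a^2^2) set"
  assumes G: "\<And>X Y. X \<in> G \<Longrightarrow> Y \<in> G \<Longrightarrow> X ** Y \<in> G" and g: "g ** gi = mat 1"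
    and upper: "\<And>x. g ** mat2 1 x 0 1 ** gi \<in> closure G"
    and lower: "\<And>x. g ** mat2 1 0 x 1 ** gi \<in> closure G"
  shows "SL2 \<subseteq> closure G"
proof
  fix X :: "'a^2^2" assume "X \<in> SL2"
  have gi: "gi ** g = mat 1" using g matrix_left_right_inverse by blast
  have "det (gi ** X ** g) = det (gi ** g) * det X" by (simp add: det_mul)
  hence "det (gi ** X ** g) = 1" using \<open>X \<in> SL2\<close> gi by (simp add: SL2_def)
  then obtain e a b c where
    fac: "gi ** X ** g = mat2 1 0 e 1 ** mat2 1 a 0 1 ** mat2 1 0 b 1 ** mat2 1 c 0 1"
    by (rule SL2_lower_upper_factorization)
  have "X = g ** (gi ** X ** g) ** gi" using conj_cancel[OF g] by simp
  also have "\<dots> = (g ** mat2 1 0 e 1 ** gi) ** (g ** mat2 1 a 0 1 ** gi)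
      ** (g ** mat2 1 0 b 1 ** gi) ** (g ** mat2 1 c 0 1 ** gi)"
    unfolding fac by (simp add: conj_mult[OF gi])
  finally show "X \<in> closure G"
    using closure_matrix_mult_closed[OF G] upper lower by metis
qed

end

section \<open>p-adic fields\<close>

lemma exists_multiplier_mod:
  fixes a b :: int
  assumes "coprime b (int m)" and "0 < m"
  shows "\<exists>j < m. int m dvd a - int j * b"
proof -
  obtain u v where uv: "u * b + v * int m = 1"
    using bezout_int[of b "int m"] assms(1) by (metis coprime_iff_gcd_eq_1)
  define j where "j = nat ((u * a) mod int m)"
  have j: "int j = (u * a) mod int m" and "j < m"
    unfolding j_def using assms(2) by (simp_all add: nat_less_iff)
  have "a - int j * b = a * (1 - u * b) + int m * ((u * a) div int m) * b"
    unfolding j by (simp add: minus_div_mult_eq_mod[symmetric] algebra_simps)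
  also have "\<dots> = int m * (a * v + (u * a) div int m * b)"
    using uv by (simp add: algebra_simps flip: uv)
  finally show ?thesis using \<open>j < m\<close> by auto
qed

locale padic_field = nonarch_abs N for N :: "'a::{field_char_0, metric_space} \<Rightarrow> real" +
  fixes p :: nat
  assumes prime_p: "prime p"
    and N_of_rat: "N (of_rat q) = padic_abs_rat p q"
    and dense_of_rat: "closure (range (of_rat :: rat \<Rightarrow> 'a)) = UNIV"
    and complete_UNIV: "complete (UNIV :: 'a set)"
begin

lemma p_gt_1: "1 < real p"
  using prime_gt_1_nat[OF prime_p] by simp

lemma divide_p_power_tendsto_0: "(\<lambda>n. c / real p ^ n) \<longlonglongrightarrow> 0"
  using LIMSEQ_divide_realpow_zero[OF p_gt_1] .

lemma not_unit_p: "\<not> is_unit (int p)"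
  using prime_p by (metis not_prime_unit prime_nat_int_transfer)

lemma N_of_int: "N (of_int k) = (if k = 0 then 0 else 1 / real p ^ multiplicity (int p) k)"
  using N_of_rat[of "of_int k"] by (simp add: padic_abs_rat_def quotient_of_int)

lemma N_of_int_coprime: "\<not> int p dvd k \<Longrightarrow> N (of_int k) = 1"
  unfolding N_of_int by (auto simp: not_dvd_imp_multiplicity_0)

lemma N_of_int_dvd:
  assumes "int p ^ m dvd k"
  shows "N (of_int k) \<le> 1 / real p ^ m"
proof (cases "k = 0")
  case False
  have "m \<le> multiplicity (int p) k" by (rule multiplicity_geI[OF False not_unit_p assms])
  hence "real p ^ m \<le> real p ^ multiplicity (int p) k"
    using p_gt_1 by (intro power_increasing) auto
  thus ?thesis unfolding N_of_int using False p_gt_1 by (simp add: frac_le)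
qed simp

lemma N_of_nat_p: "N (of_nat p) = 1 / real p"
proof -
  have "multiplicity (int p) (int p) = 1"
    using not_unit_p prime_gt_0_nat[OF prime_p] by (intro multiplicity_self) auto
  thus ?thesis using N_of_int[of "int p"] p_gt_1 by simp
qed

lemma N_of_nat_p_power: "N (of_nat p ^ k) = 1 / real p ^ k"
  by (simp add: N_power N_of_nat_p power_one_over)

lemma not_dvd_denominator_if_N_of_rat_le_1:
  assumes "N (of_rat q) \<le> 1" and "quotient_of q = (a, b)"
  shows "\<not> int p dvd b"
proof
  assume pb: "int p dvd b"
  have q: "(of_rat q :: 'a) = of_int a / of_int b"
    using quotient_of_div[OF assms(2)] by (simp add: of_rat_divide)
  have "\<not> int p dvd a"
    using pb quotient_of_coprime[OF assms(2)] not_unit_p by (meson coprime_common_divisor)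
  hence "N (of_int a) = 1" by (rule N_of_int_coprime)
  moreover have "N (of_int b) \<le> 1 / real p" using N_of_int_dvd[of 1 b] pb by simp
  moreover have "0 < N (of_int b :: 'a)"
    using quotient_of_denom_pos[OF assms(2)] by (intro N_pos) simp
  ultimately have "real p \<le> N (of_rat q)"
    unfolding q N_divide using p_gt_1 by (simp add: field_simps)
  thus False using assms(1) p_gt_1 by linarith
qed

lemma exists_nat_approx:
  assumes "N x \<le> 1"
  shows "\<exists>j < p ^ k. N (x - of_nat j) \<le> 1 / real p ^ k"
proof -
  have "x \<in> closure (range of_rat)" and "0 < 1 / real p ^ k" using dense_of_rat p_gt_1 by simp_all
  then obtain y where "y \<in> range of_rat" "dist y x < 1 / real p ^ k"
    unfolding closure_approachable by blast
  then obtain q where q: "N (x - of_rat q) < 1 / real p ^ k"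
    by (auto simp: dist_eq_N N_minus_commute)
  have "1 / real p ^ k \<le> 1" using p_gt_1 by simp
  hence "max (N (of_rat q - x)) (N x) \<le> 1"
    using q assms N_minus_commute[of "of_rat q" x] by simp
  hence "N (of_rat q) \<le> 1"
    using order_trans[OF N_add_le_max[of "of_rat q - x" x]] by simp
  obtain a b where ab: "quotient_of q = (a, b)" by (cases "quotient_of q")
  have "\<not> int p dvd b" by (rule not_dvd_denominator_if_N_of_rat_le_1[OF \<open>N (of_rat q) \<le> 1\<close> ab])
  hence "coprime (int p) b" using prime_p by (simp add: prime_imp_coprime)
  hence "coprime b (int p ^ k)" by (simp add: coprime_commute)
  then obtain j where "j < p ^ k" and dvd: "int p ^ k dvd a - int j * b"
    using exists_multiplier_mod[of b "p ^ k" a] prime_gt_0_nat[OF prime_p] by auto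
  have "(of_rat q :: 'a) = of_int a / of_int b"
    using quotient_of_div[OF ab] by (simp add: of_rat_divide)
  hence "(of_rat q :: 'a) - of_nat j = of_int (a - int j * b) / of_int b"
    using quotient_of_denom_pos[OF ab] by (simp add: field_simps)
  hence "N (of_rat q - of_nat j) \<le> 1 / real p ^ k"
    using N_of_int_dvd[OF dvd] N_of_int_coprime[OF \<open>\<not> int p dvd b\<close>] by (simp add: N_divide)
  moreover have "N (x - of_nat j) \<le> max (N (x - of_rat q)) (N (of_rat q - of_nat j))"
    using N_add_le_max[of "x - of_rat q" "of_rat q - of_nat j"] by simp
  ultimately show ?thesis using q \<open>j < p ^ k\<close> by auto
qed

lemma compact_unit_ball: "compact {x::'a. N x \<le> 1}"
proof -
  have ball: "{x::'a. N x \<le> 1} = cball 0 1" by (auto simp: dist_eq_N N_minus_commute)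
  have "complete {x::'a. N x \<le> 1}"
    unfolding ball by (rule complete_closed_subset[OF closed_cball _ complete_UNIV]) simp
  moreover have "\<exists>K. finite K \<and> {x::'a. N x \<le> 1} \<subseteq> (\<Union>y\<in>K. ball y e)" if "0 < e" for e
  proof -
    obtain k where "(1 / real p) ^ k < e" using real_arch_pow_inv[OF \<open>0 < e\<close>, of "1 / real p"] p_gt_1 by auto
    hence k: "1 / real p ^ k < e" by (simp add: power_one_over)
    show ?thesis
    proof (intro exI conjI)
      show "{x::'a. N x \<le> 1} \<subseteq> (\<Union>y\<in>of_nat ` {..<p^k}. ball y e)"
        using exists_nat_approx[where k = k] k
        by (force simp: dist_eq_N N_minus_commute)
    qed simp
  qed
  ultimately show ?thesis using compact_eq_totally_bounded by blast
qed

lemma exists_add_inverse_eq: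
  assumes t: "N t = real p"
  shows "\<exists>l. N (l - t) \<le> 1 / real p \<and> l + inverse l = t"
proof -
  define S where "S = cball t (1 / real p)"
  have S: "x \<in> S \<longleftrightarrow> N (x - t) \<le> 1 / real p" for x
    by (simp add: S_def dist_eq_N N_minus_commute)
  have N_S: "N x = real p" if "x \<in> S" for x
  proof -
    have "1 / real p < 1" using p_gt_1 by simp
    hence "N (x - t) < N t" using that p_gt_1 t unfolding S by linarith
    thus ?thesis using N_add_eq_right[of "x - t" t] t by simp
  qed
  define f where "f x = t - inverse x" for x
  have "f ` S \<subseteq> S"
  proof
    fix y assume "y \<in> f ` S"
    then obtain x where "x \<in> S" "y = f x" by blast
    thus "y \<in> S" using N_S[of x] by (simp add: S f_def N_inverse divide_inverse)
  qed
  moreover have "dist (f x) (f y) \<le> 1 / (real p * real p) * dist x y" if "x \<in> S" "y \<in> S" for x y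
  proof -
    have "x \<noteq> 0" "y \<noteq> 0" using N_S[OF that(1)] N_S[OF that(2)] p_gt_1 by auto
    hence "f x - f y = (x - y) / (x * y)" unfolding f_def by (simp add: field_simps)
    thus ?thesis using N_S[OF that(1)] N_S[OF that(2)] by (simp add: dist_eq_N N_divide N_mult)
  qed
  moreover have "complete S"
    unfolding S_def by (rule complete_closed_subset[OF closed_cball _ complete_UNIV]) simp
  moreover have "S \<noteq> {}" using S[of t] by auto
  moreover have "1 < real p * real p" using p_gt_1 less_1_mult by blast
  ultimately obtain l where "l \<in> S" "f l = l"
    using Banach_fix[of S "1 / (real p * real p)" f] by auto
  thus ?thesis unfolding S f_def by (intro exI[of _ l]) (auto simp: algebra_simps)
qed

lemma closed_additive_scaling_invariant_eq_UNIV: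
  fixes T :: "'a set"
  assumes "closed T" and "0 \<in> T" and add: "\<And>s t. s \<in> T \<Longrightarrow> t \<in> T \<Longrightarrow> s + t \<in> T"
    and scale: "\<And>s. s \<in> T \<Longrightarrow> c * s \<in> T" and c: "1 < N c"
    and "a \<in> T" and "a \<noteq> 0"
  shows "T = UNIV"
proof -
  have nat_mult: "of_nat j * a \<in> T" for j
    by (induction j) (simp_all add: \<open>0 \<in> T\<close> add \<open>a \<in> T\<close> distrib_right)
  have unit_ball: "y * a \<in> T" if y: "N y \<le> 1" for y
  proof -
    obtain j where j: "\<And>k. N (y - of_nat (j k)) \<le> 1 / real p ^ k"
      using exists_nat_approx[OF y] by metis
    have "(\<lambda>k. of_nat (j k) * a) \<longlonglongrightarrow> y * a"
    proof (rule tendsto_N_le)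
      fix k
      have "of_nat (j k) * a - y * a = - ((y - of_nat (j k)) * a)" by (simp add: algebra_simps)
      hence "N (of_nat (j k) * a - y * a) = N (y - of_nat (j k)) * N a" by (simp add: N_mult)
      also have "\<dots> \<le> 1 / real p ^ k * N a" using j[of k] N_nonneg by (rule mult_right_mono)
      finally show "N (of_nat (j k) * a - y * a) \<le> N a / real p ^ k" by simp
    qed (rule divide_p_power_tendsto_0)
    thus ?thesis by (rule closed_sequentially[OF \<open>closed T\<close> nat_mult])
  qed
  have scale_pow: "c ^ m * s \<in> T" if "s \<in> T" for m s
    using that by (induction m) (simp_all add: scale mult.assoc)
  show ?thesis
  proof (intro set_eqI iffI)
    fix x :: 'a
    obtain m where m: "N x / N a < N c ^ m" using real_arch_pow[OF c] by blast
    define y where "y = x / (c ^ m * a)"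
    have "c \<noteq> 0" using c by auto
    hence "x = c ^ m * (y * a)" unfolding y_def using \<open>a \<noteq> 0\<close> by (simp add: field_simps)
    moreover have "N y \<le> 1"
      unfolding y_def using m N_pos[OF \<open>a \<noteq> 0\<close>] N_pos[OF \<open>c \<noteq> 0\<close>]
      by (simp add: N_divide N_mult N_power field_simps)
    ultimately show "x \<in> T" using scale_pow unit_ball by metis
  qed simp
qed

section \<open>Unipotent elements in the closure of a subgroup\<close>

lemma mat_pow_p_near_1:
  fixes M :: "'a^2^2"
  assumes M: "mnorm (M - mat 1) \<le> d" and Mij: "N ((M - mat 1)$i$j) = d"
    and d: "0 < d" "d < 1 / real p"
  shows "mnorm (mat_pow M p - mat 1) \<le> d / real p \<and> N ((mat_pow M p - mat 1)$i$j) = d / real p"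
proof -
  define R where "R = mat_pow M p - mat 1 - mat_scale (of_nat p) (M - mat 1)"
  have "d \<le> 1" using d p_gt_1 by (smt (verit) divide_le_eq_1_pos)
  hence "mnorm R \<le> d * d" using mnorm_mat_pow_expansion[OF M] unfolding R_def by blast
  moreover have "d * d < d / real p" using d p_gt_1 by (simp add: field_simps)
  ultimately have R: "N (R$k$l) < d / real p" for k l using N_nth_le_mnorm[of R k l] by linarith
  have entry: "(mat_pow M p - mat 1)$k$l = of_nat p * (M - mat 1)$k$l + R$k$l" for k l
    unfolding R_def by simp
  have scaled: "N (of_nat p * (M - mat 1)$k$l) = N ((M - mat 1)$k$l) / real p" for k l
    by (simp add: N_mult N_of_nat_p)
  have "N ((mat_pow M p - mat 1)$k$l) \<le> d / real p" for k l
  proof -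
    have "N (of_nat p * (M - mat 1)$k$l) \<le> d / real p"
      unfolding scaled using N_nth_le_mnorm[of "M - mat 1" k l] M p_gt_1 by (simp add: divide_right_mono)
    thus ?thesis unfolding entry
      using order_trans[OF N_add_le_max max.boundedI] R[of k l] by (simp add: less_imp_le)
  qed
  moreover have "N ((mat_pow M p - mat 1)$i$j) = d / real p"
    unfolding entry using N_add_eq_left[of "R$i$j"] R scaled Mij by simp
  ultimately show ?thesis by (simp add: mnorm_le)
qed

lemma mat_pow_p_power_near_1:
  fixes M :: "'a^2^2"
  assumes "mnorm (M - mat 1) \<le> d" and "N ((M - mat 1)$i$j) = d"
    and d: "0 < d" "d < 1 / real p"
  shows "mnorm (mat_pow M (p ^ m) - mat 1) \<le> d / real p ^ m
    \<and> N ((mat_pow M (p ^ m) - mat 1)$i$j) = d / real p ^ m"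
proof (induction m)
  case (Suc m)
  have "d / real p ^ m \<le> d" using d p_gt_1 by (simp add: divide_le_eq mult_le_cancel_left1 one_le_power)
  hence "0 < d / real p ^ m" "d / real p ^ m < 1 / real p" using d p_gt_1 by simp_all
  moreover have "mat_pow M (p ^ Suc m) = mat_pow (mat_pow M (p ^ m)) p"
    by (simp add: mat_pow_mult[symmetric] mult.commute)
  ultimately show ?case using mat_pow_p_near_1[of "mat_pow M (p ^ m)" "d / real p ^ m" i j] Suc
    by (simp add: field_simps)
qed (use assms in simp)

lemma conj_unipotent_in_closure_if_limit:
  fixes G :: "('a^2^2) set" and V :: "nat \<Rightarrow> 'a^2^2"
  assumes VG: "\<And>n. g ** V n ** gi \<in> G"
    and V11: "(\<lambda>n. V n $1$1) \<longlonglongrightarrow> 1" and V22: "(\<lambda>n. V n $2$2) \<longlonglongrightarrow> 1"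
    and V21: "(\<lambda>n. V n $2$1) \<longlonglongrightarrow> 0"
    and V12: "\<And>n. N (V n $1$2) = N e" and "e \<noteq> 0"
  shows "\<exists>s. s \<noteq> 0 \<and> g ** mat2 1 s 0 1 ** gi \<in> closure G"
proof -
  have "\<forall>n. V n $1$2 / e \<in> {x. N x \<le> 1}" using V12 \<open>e \<noteq> 0\<close> by (simp add: N_divide)
  then obtain l r where "strict_mono r" and "((\<lambda>n. V n $1$2 / e) \<circ> r) \<longlonglongrightarrow> l"
    by (rule seq_compactE[OF compact_imp_seq_compact[OF compact_unit_ball]])
  hence lim: "(\<lambda>n. V (r n) $1$2 / e) \<longlonglongrightarrow> l" by (simp add: comp_def)
  have "(\<lambda>n. N (V (r n) $1$2 / e)) \<longlonglongrightarrow> N l" by (rule tendsto_N[OF lim])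
  moreover have "(\<lambda>n. N (V (r n) $1$2 / e)) = (\<lambda>_. 1)" using V12 \<open>e \<noteq> 0\<close> by (simp add: N_divide)
  ultimately have "N l = 1" by (simp add: LIMSEQ_const_iff)
  have sub: "(\<lambda>n. V (r n) $i$j) \<longlonglongrightarrow> c" if "(\<lambda>n. V n $i$j) \<longlonglongrightarrow> c" for i j c
    using LIMSEQ_subseq_LIMSEQ[OF that \<open>strict_mono r\<close>] by (simp add: comp_def)
  have "(\<lambda>n. e * (V (r n) $1$2 / e)) \<longlonglongrightarrow> e * l" by (intro tendsto_mult_N tendsto_const lim)
  hence "(\<lambda>n. V (r n) $1$2) \<longlonglongrightarrow> e * l" using \<open>e \<noteq> 0\<close> by simp
  from tendsto_mat2[OF sub[OF V11] this sub[OF V21] sub[OF V22]]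
  have "(\<lambda>n. g ** V (r n) ** gi) \<longlonglongrightarrow> g ** mat2 1 (e * l) 0 1 ** gi"
    unfolding mat2_entries by (intro tendsto_matrix_mult_N tendsto_const)
  hence "g ** mat2 1 (e * l) 0 1 ** gi \<in> closure G"
    by (intro iffD2[OF closure_sequential] exI[of _ "\<lambda>n. g ** V (r n) ** gi"]) (simp add: VG)
  moreover have "e * l \<noteq> 0" using \<open>e \<noteq> 0\<close> \<open>N l = 1\<close> by auto
  ultimately show ?thesis by blast
qed

lemma conj_upper_unipotents_in_closure_if_nontrivial:
  fixes G :: "('a^2^2) set"
  assumes G: "\<And>X Y. X \<in> G \<Longrightarrow> Y \<in> G \<Longrightarrow> X ** Y \<in> G" "mat 1 \<in> G"
    and g: "g ** gi = mat 1"
    and lam: "N lam = real p" "lam * mu = 1"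
    and D: "g ** mat2 lam 0 0 mu ** gi \<in> G" "g ** mat2 mu 0 0 lam ** gi \<in> G"
    and s0: "s0 \<noteq> 0" "g ** mat2 1 s0 0 1 ** gi \<in> closure G"
  shows "g ** mat2 1 x 0 1 ** gi \<in> closure G"
proof -
  have gi: "gi ** g = mat 1" using g matrix_left_right_inverse by blast
  have clm: "A \<in> closure G \<Longrightarrow> B \<in> closure G \<Longrightarrow> A ** B \<in> closure G" for A B
    by (rule closure_matrix_mult_closed[OF G(1)])
  define T where "T = {s. g ** mat2 1 s 0 1 ** gi \<in> closure G}"
  have "closed T"
    unfolding closed_sequential_limits
  proof (intro allI impI, elim conjE)
    fix s l assume "\<forall>n. s n \<in> T" and "s \<longlonglongrightarrow> l"
    hence "(\<lambda>n. g ** mat2 1 (s n) 0 1 ** gi) \<longlonglongrightarrow> g ** mat2 1 l 0 1 ** gi"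
      by (intro tendsto_matrix_mult_N tendsto_const tendsto_mat2)
    moreover have "g ** mat2 1 (s n) 0 1 ** gi \<in> closure G" for n
      using \<open>\<forall>n. s n \<in> T\<close> by (simp add: T_def)
    ultimately show "l \<in> T"
      unfolding T_def mem_Collect_eq by (rule closed_sequentially[OF closed_closure, rotated])
  qed
  moreover have "0 \<in> T"
    using G(2) g closure_subset by (auto simp: T_def mat_1_eq_mat2[symmetric])
  moreover have "s + t \<in> T" if "s \<in> T" "t \<in> T" for s t
    using clm[of "g ** mat2 1 s 0 1 ** gi" "g ** mat2 1 t 0 1 ** gi"] that
    by (simp add: T_def conj_mult[OF gi] mat2_mult add.commute)
  moreover have "lam * lam * s \<in> T" if "s \<in> T" for s
  proof -
    have "mat2 lam 0 0 mu ** mat2 1 s 0 1 ** mat2 mu 0 0 lam = mat2 1 (lam * lam * s) 0 1"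
      using lam(2) by (simp add: mat2_mult algebra_simps)
    thus ?thesis
      using clm[OF clm[OF closure_subset[THEN subsetD, OF D(1)] that[unfolded T_def, simplified]]
          closure_subset[THEN subsetD, OF D(2)]]
      by (simp add: T_def conj_mult[OF gi])
  qed
  moreover have "1 < N (lam * lam)"
    using lam(1) p_gt_1 by (simp add: N_mult less_1_mult)
  ultimately have "T = UNIV"
    using s0 by (intro closed_additive_scaling_invariant_eq_UNIV[where c = "lam * lam" and a = s0])
      (auto simp: T_def)
  thus ?thesis unfolding T_def by blast
qed

lemma diagonal_conj_mat_pow_p_limits:
  fixes C :: "'a^2^2"
  assumes lam: "N lam = real p" "lam * mu = 1"
    and C: "mnorm (C - mat 1) \<le> d" "N ((C - mat 1)$1$2) = d"
    and d: "0 < d" "d < 1 / real p"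
  defines "V \<equiv> \<lambda>n. mat2 (lam ^ n) 0 0 (mu ^ n) ** mat_pow C (p ^ (2 * n)) ** mat2 (mu ^ n) 0 0 (lam ^ n)"
  shows "(\<lambda>n. V n $1$1) \<longlonglongrightarrow> 1" and "(\<lambda>n. V n $2$2) \<longlonglongrightarrow> 1"
    and "(\<lambda>n. V n $2$1) \<longlonglongrightarrow> 0" and "N (V n $1$2) = d"
proof -
  define Cn where "Cn n = mat_pow C (p ^ (2 * n))" for n
  have Cn: "mnorm (Cn n - mat 1) \<le> d / real p ^ (2 * n)"
    "N ((Cn n - mat 1)$1$2) = d / real p ^ (2 * n)" for n
    using mat_pow_p_power_near_1[OF C d, of "2 * n"] by (simp_all add: Cn_def)
  have "d / real p ^ (2 * n) \<le> d / real p ^ n" for n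
    using p_gt_1 d by (intro divide_left_mono power_increasing) auto
  hence small: "N ((Cn n - mat 1)$i$j) \<le> d / real p ^ n" for n i j
    using N_nth_le_mnorm[of "Cn n - mat 1" i j] Cn(1)[of n] by (meson order_trans)
  have entries: "N (Cn n $1$1 - 1) \<le> d / real p ^ n" "N (Cn n $2$2 - 1) \<le> d / real p ^ n"
    "N (Cn n $2$1) \<le> d / real p ^ n" "N (Cn n $1$2) = d / real p ^ (2 * n)" for n
    using small[of n 1 1] small[of n 2 2] small[of n 2 1] Cn(2)[of n] by (simp_all add: mat_def)
  have "lam ^ n * mu ^ n = 1" for n by (metis lam(2) power_mult_distrib power_one)
  \<comment> \<open>the factor lam^(2n) on the upper right entry exactly compensates its decay p^(-2n)\<close>
  hence V: "V n = mat2 (Cn n $1$1) (lam ^ (2 * n) * Cn n $1$2) (mu ^ (2 * n) * Cn n $2$1) (Cn n $2$2)"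
    for n
    unfolding V_def Cn_def mat2_diagonal_conj by (simp add: mult.commute power_mult power2_eq_square)
  have mu: "N mu = 1 / real p" using lam N_mult[of lam mu] p_gt_1 by (simp add: field_simps)
  show "(\<lambda>n. V n $1$1) \<longlonglongrightarrow> 1" "(\<lambda>n. V n $2$2) \<longlonglongrightarrow> 1"
    by (rule tendsto_N_le[OF _ divide_p_power_tendsto_0[of d]], simp add: V entries)+
  show "(\<lambda>n. V n $2$1) \<longlonglongrightarrow> 0"
  proof (rule tendsto_N_le[OF _ divide_p_power_tendsto_0[of d]])
    fix n
    have "N (mu ^ (2 * n)) \<le> 1" using mu p_gt_1 by (simp add: N_power power_le_one)
    hence "N (mu ^ (2 * n) * Cn n $2$1) \<le> N (Cn n $2$1)"
      using mult_right_mono[OF _ N_nonneg[of "Cn n $2$1"], of _ 1] by (simp add: N_mult)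
    thus "N (V n $2$1 - 0) \<le> d / real p ^ n" using entries(3)[of n] by (simp add: V)
  qed
  show "N (V n $1$2) = d"
    using entries(4)[of n] lam(1) p_gt_1 by (simp add: V N_mult N_power)
qed

lemma conj_upper_unipotents_in_closure:
  fixes G :: "('a^2^2) set"
  assumes G: "\<And>X Y. X \<in> G \<Longrightarrow> Y \<in> G \<Longrightarrow> X ** Y \<in> G" "mat 1 \<in> G"
    and g: "g ** gi = mat 1"
    and lam: "N lam = real p" "lam * mu = 1"
    and D: "g ** mat2 lam 0 0 mu ** gi \<in> G" "g ** mat2 mu 0 0 lam ** gi \<in> G"
    and C: "g ** C ** gi \<in> G" "mnorm (C - mat 1) \<le> d" "N ((C - mat 1)$1$2) = d"
    and d: "0 < d" "d < 1 / real p"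
  shows "g ** mat2 1 x 0 1 ** gi \<in> closure G"
proof -
  have gi: "gi ** g = mat 1" using g matrix_left_right_inverse by blast
  define V where "V n = mat2 (lam ^ n) 0 0 (mu ^ n) ** mat_pow C (p ^ (2 * n)) ** mat2 (mu ^ n) 0 0 (lam ^ n)"
    for n
  have "g ** V n ** gi = mat_pow (g ** mat2 lam 0 0 mu ** gi) n
      ** mat_pow (g ** C ** gi) (p ^ (2 * n)) ** mat_pow (g ** mat2 mu 0 0 lam ** gi) n" for n
    unfolding V_def mat_pow_conj[OF gi g] conj_mult[OF gi] mat_pow_mat2_diagonal ..
  hence "g ** V n ** gi \<in> G" for n by (simp only:) (intro G(1) mat_pow_closed[OF G] D C(1))
  moreover note diagonal_conj_mat_pow_p_limits[OF lam C(2,3) d, folded V_def]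
  moreover have "(C - mat 1)$1$2 \<noteq> 0" using C(3) d by auto
  ultimately have "\<exists>s. s \<noteq> 0 \<and> g ** mat2 1 s 0 1 ** gi \<in> closure G"
    using conj_unipotent_in_closure_if_limit[of g V gi G "(C - mat 1)$1$2"] C(3) by blast
  then obtain s0 where s0: "s0 \<noteq> 0" "g ** mat2 1 s0 0 1 ** gi \<in> closure G" by blast
  show ?thesis by (rule conj_upper_unipotents_in_closure_if_nontrivial[OF G g lam D s0])
qed

lemma SL2_subset_closure_if_hyperbolic_and_transverse:
  fixes G :: "('a^2^2) set"
  assumes G: "\<And>X Y. X \<in> G \<Longrightarrow> Y \<in> G \<Longrightarrow> X ** Y \<in> G" "mat 1 \<in> G"
    and g: "g ** gi = mat 1"
    and lam: "N lam = real p" "lam * mu = 1"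
    and D: "g ** mat2 lam 0 0 mu ** gi \<in> G" "g ** mat2 mu 0 0 lam ** gi \<in> G"
    and C: "g ** C ** gi \<in> G" "mnorm (C - mat 1) \<le> d"
      "N ((C - mat 1)$1$2) = d" "N ((C - mat 1)$2$1) = d"
    and d: "0 < d" "d < 1 / real p"
  shows "SL2 \<subseteq> closure G"
proof (rule SL2_subset_closure_if_conj_unipotents[OF G(1) g])
  show "g ** mat2 1 x 0 1 ** gi \<in> closure G" for x
    by (rule conj_upper_unipotents_in_closure[OF G g lam D C(1-3) d])
  define w :: "'a^2^2" where "w = mat2 0 1 1 0"
  have w: "w ** w = mat 1" unfolding w_def by (rule mat2_swap_square)
  have swap: "(g ** w) ** X ** (w ** gi) = g ** (w ** X ** w) ** gi" for X
    by (simp add: matrix_mul_assoc)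
  have gw: "(g ** w) ** (w ** gi) = mat 1"
    using g w by (metis matrix_mul_assoc matrix_mul_rid)
  have Dw: "(g ** w) ** mat2 lam 0 0 mu ** (w ** gi) \<in> G"
    "(g ** w) ** mat2 mu 0 0 lam ** (w ** gi) \<in> G"
    using D unfolding swap by (simp_all add: w_def mat2_swap_conj)
  have "w ** (w ** C ** w) ** w = C"
    by (metis matrix_mul_assoc matrix_mul_lid matrix_mul_rid w)
  hence Cw: "(g ** w) ** (w ** C ** w) ** (w ** gi) \<in> G"
    using C(1) unfolding swap by simp
  have "w ** C ** w - mat 1 = w ** (C - mat 1) ** w"
    using w by (simp add: matrix_diff_ldistrib matrix_diff_rdistrib)
  also have "\<dots> = mat2 ((C - mat 1)$2$2) ((C - mat 1)$2$1) ((C - mat 1)$1$2) ((C - mat 1)$1$1)"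
    unfolding w_def by (rule mat2_swap_conj_entries)
  finally have Cw_near: "mnorm (w ** C ** w - mat 1) \<le> d" "N ((w ** C ** w - mat 1)$1$2) = d"
    using order_trans[OF N_nth_le_mnorm C(2)] C(4) by (simp_all only: mnorm_mat2 mat2_nth) simp
  have "(g ** w) ** mat2 1 x 0 1 ** (w ** gi) \<in> closure G" for x
    by (rule conj_upper_unipotents_in_closure[OF G gw lam Dw Cw Cw_near d])
  thus "g ** mat2 1 0 x 1 ** gi \<in> closure G" for x
    unfolding swap by (simp add: w_def mat2_swap_conj)
qed

section \<open>Choice of the two generators\<close>

lemma N_entries_near_diag_p:
  assumes "dist a (mat2 (inverse (of_nat p)) 0 0 (of_nat p)) < 1"
  shows "N (a$1$1) = real p" "N (a$2$2) < 1" "N (a$1$2) < 1" "N (a$2$1) < 1"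
proof -
  define A0 :: "'a^2^2" where "A0 = mat2 (inverse (of_nat p)) 0 0 (of_nat p)"
  have close: "N (a$i$j - A0$i$j) < 1" for i j
    using N_nth_le_mnorm[of "a - A0" i j] mnorm_le_dist[of a A0] assms by (simp add: A0_def)
  have p: "1 / real p < 1" "1 < real p" using p_gt_1 by simp_all
  show "N (a$1$1) = real p"
    using N_add_eq_right[of "a$1$1 - inverse (of_nat p)" "inverse (of_nat p)"] close[of 1 1] p
    by (simp add: A0_def N_inverse N_of_nat_p)
  have "max (N (a$2$2 - of_nat p)) (N (of_nat p)) < 1"
    using close[of 2 2] p by (simp add: A0_def N_of_nat_p)
  thus "N (a$2$2) < 1"
    using le_less_trans[OF N_add_le_max[of "a$2$2 - of_nat p" "of_nat p"]] by simp
  show "N (a$1$2) < 1" "N (a$2$1) < 1" using close[of 1 2] close[of 2 1] by (simp_all add: A0_def)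
qed

lemma conj_diagonal_if_near_diag_p:
  assumes "det a = 1" and "dist a (mat2 (inverse (of_nat p)) 0 0 (of_nat p)) < 1"
  obtains g gi lam mu
  where "g ** gi = mat 1" "a = g ** mat2 lam 0 0 mu ** gi" "lam * mu = 1" "N lam = real p"
proof -
  define x y z w where "x = a$1$1" and "y = a$1$2" and "z = a$2$1" and "w = a$2$2"
  have a: "a = mat2 x y z w" and det: "x * w - y * z = 1"
    using mat2_entries[of a] assms(1) by (simp_all add: x_def y_def z_def w_def det_2)
  have Nx: "N x = real p" and Nw: "N w < 1" and Ny: "N y < 1" and Nz: "N z < 1"
    using N_entries_near_diag_p[OF assms(2)] by (simp_all add: x_def y_def z_def w_def)
  have Nyz: "N (y * z) < 1"
    using mult_strict_mono'[OF Ny Nz N_nonneg N_nonneg] by (simp add: N_mult)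
  have p: "1 / real p < 1" "1 < real p" "1 < real p * real p"
    using p_gt_1 less_1_mult[OF p_gt_1 p_gt_1] by simp_all
  have Nt: "N (x + w) = real p" using N_add_eq_left[of w x] Nx Nw p by simp
  then obtain lam where lam: "N (lam - (x + w)) \<le> 1 / real p" "lam + inverse lam = x + w"
    using exists_add_inverse_eq by blast
  define mu where "mu = inverse lam"
  have Nlam: "N lam = real p"
    using N_add_eq_right[of "lam - (x + w)" "x + w"] lam(1) Nt p by simp
  hence "lam \<noteq> 0" using p by auto
  hence lam_mu: "lam * mu = 1" by (simp add: mu_def)
  have Nmu: "N mu = 1 / real p" using Nlam by (simp add: mu_def N_inverse divide_inverse)
  have "N w < N lam" "N mu < N x" "N (y * z) < real p * real p"
    using Nw Nlam Nmu Nx Nyz p by linarith+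
  hence "N (lam - w) = real p" "N (mu - x) = real p"
    using N_add_eq_left[of "- w" lam] N_add_eq_right[of mu "- x"] Nlam Nx by simp_all
  define D where "D = (lam - w) * (mu - x) - y * z"
  define g where "g = mat2 (lam - w) y z (mu - x)"
  define gi where "gi = mat2 ((mu - x) / D) (- y / D) (- z / D) ((lam - w) / D)"
  have "N D = real p * real p"
    unfolding D_def using N_add_eq_left[of "- (y * z)" "(lam - w) * (mu - x)"]
      \<open>N (lam - w) = real p\<close> \<open>N (mu - x) = real p\<close> \<open>N (y * z) < real p * real p\<close>
    by (simp add: N_mult)
  hence "D \<noteq> 0" using p by auto
  hence g: "g ** gi = mat 1" unfolding g_def gi_def by (intro mat2_inverse_right) (simp_all add: D_def)
  have "a ** g = g ** mat2 lam 0 0 mu"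
    unfolding a g_def using lam(2) lam_mu by (intro mat2_eigenvector_columns[OF det]) (simp_all add: mu_def)
  hence "a = g ** mat2 lam 0 0 mu ** gi" using g by (metis matrix_mul_assoc matrix_mul_rid)
  show ?thesis using g \<open>a = g ** mat2 lam 0 0 mu ** gi\<close> lam_mu Nlam by (rule that)
qed

lemma exists_conj_diagonal_in_dense:
  assumes "is_subgroup_SL2 H" and "SL2 \<subseteq> closure H"
  obtains a g gi lam mu where "a \<in> H" "g ** gi = mat 1" "a = g ** mat2 lam 0 0 mu ** gi"
    "N lam = real p" "lam * mu = 1"
proof -
  have "mat2 (inverse (of_nat p)) 0 0 (of_nat p) \<in> closure H"
    using assms(2) p_gt_1 by (auto simp: SL2_def det_mat2)
  then obtain a where a: "a \<in> H" "dist a (mat2 (inverse (of_nat p)) 0 0 (of_nat p)) < 1"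
    unfolding closure_approachable using zero_less_one by blast
  moreover have "det a = 1" using a(1) assms(1) by (auto simp: is_subgroup_SL2_def SL2_def)
  ultimately show ?thesis using that by (metis conj_diagonal_if_near_diag_p)
qed

lemma exists_transverse_in_dense:
  fixes H :: "('a^2^2) set"
  assumes g: "g ** gi = mat 1" and dense: "SL2 \<subseteq> closure H"
  obtains b where "b \<in> H" "mnorm (gi ** b ** g - mat 1) \<le> 1 / real p ^ 2"
    "N ((gi ** b ** g - mat 1)$1$2) = 1 / real p ^ 2" "N ((gi ** b ** g - mat 1)$2$1) = 1 / real p ^ 2"
proof -
  define d where "d = 1 / real p ^ 2"
  define eps :: 'a where "eps = of_nat p ^ 2"
  have eps: "N eps = d" unfolding eps_def d_def by (rule N_of_nat_p_power)
  have d: "0 < d" "d \<le> 1" unfolding d_def using p_gt_1 by simp_all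
  define b0 where "b0 = mat2 (1 + eps * eps) eps eps 1"
  have gi: "gi ** g = mat 1" using g matrix_left_right_inverse by blast
  have "det (g ** b0 ** gi) = det (g ** gi) * det b0" by (simp add: det_mul)
  hence "g ** b0 ** gi \<in> SL2" using g by (simp add: SL2_def b0_def det_mat2)
  define K where "K = mnorm gi * mnorm g"
  have K: "0 \<le> K" unfolding K_def using mnorm_nonneg by simp
  have "g ** b0 ** gi \<in> closure H" and "0 < d / (K + 1)"
    using dense \<open>g ** b0 ** gi \<in> SL2\<close> d K by auto
  then obtain b where b: "b \<in> H" "dist b (g ** b0 ** gi) < d / (K + 1)"
    unfolding closure_approachable by blast
  define Y where "Y = b - g ** b0 ** gi"
  have "gi ** Y ** g = gi ** b ** g - gi ** (g ** b0 ** gi) ** g"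
    unfolding Y_def by (simp only: matrix_diff_ldistrib matrix_diff_rdistrib)
  hence conj_Y: "gi ** b ** g - b0 = gi ** Y ** g" by (simp only: conj_cancel[OF gi])
  have "mnorm (gi ** Y ** g) \<le> mnorm (gi ** Y) * mnorm g" by (rule mnorm_mult_le)
  also have "\<dots> \<le> mnorm gi * mnorm Y * mnorm g" by (intro mult_right_mono mnorm_mult_le mnorm_nonneg)
  also have "\<dots> \<le> mnorm gi * (d / (K + 1)) * mnorm g"
    using mnorm_le_dist[of b "g ** b0 ** gi"] b(2) unfolding Y_def[symmetric]
    by (intro mult_right_mono mult_left_mono) (simp_all add: mnorm_nonneg)
  also have "\<dots> = K * (d / (K + 1))" by (simp add: K_def)
  also have "\<dots> < d" using d K by (simp add: field_simps)
  finally have close: "mnorm (gi ** b ** g - b0) < d" unfolding conj_Y .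
  have split: "gi ** b ** g - mat 1 = (gi ** b ** g - b0) + mat2 (eps * eps) eps eps 0"
    by (simp add: b0_def mat_1_eq_mat2 vec_eq_iff forall_2)
  have "N ((gi ** b ** g - b0)$i$j) < N eps" for i j
    using N_nth_le_mnorm[of "gi ** b ** g - b0" i j] close eps by linarith
  hence "N ((gi ** b ** g - mat 1)$1$2) = d" "N ((gi ** b ** g - mat 1)$2$1) = d"
    unfolding split using N_add_eq_right eps by simp_all
  moreover have "mnorm (mat2 (eps * eps) eps eps 0) \<le> d"
    using eps d by (simp add: mnorm_mat2 N_mult mult_le_one)
  hence "mnorm (gi ** b ** g - mat 1) \<le> d"
    unfolding split using order_trans[OF mnorm_add_le] close by simp
  ultimately show ?thesis using b(1) that unfolding d_def by blast
qed

end

lemma padic_fieldI: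
  assumes "prime p" and "is_padic_field p N"
  shows "padic_field N p"
  using assms by unfold_locales (auto simp: is_padic_field_def)

theorem proposition1p7:
  fixes p :: nat
    and N :: "'a::{field_char_0, metric_space} \<Rightarrow> real"
    and H :: "('a ^ 2 ^ 2) set"
  assumes "prime p"
    and "is_padic_field p N"
    and "is_subgroup_SL2 H"
    and "SL2 \<subseteq> closure H"
  shows "\<exists>a\<in>H. \<exists>b\<in>H. SL2 \<subseteq> closure (subgroup_generated_SL2 {a, b})"
proof -
  interpret padic_field N p by (rule padic_fieldI[OF assms(1,2)])
  obtain a g gi lam mu where a: "a \<in> H" and g: "g ** gi = mat 1"
    and a_diag: "a = g ** mat2 lam 0 0 mu ** gi" and lam: "N lam = real p" "lam * mu = 1"
    using exists_conj_diagonal_in_dense[OF assms(3,4)] by blast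
  obtain b where b: "b \<in> H" "mnorm (gi ** b ** g - mat 1) \<le> 1 / real p ^ 2"
    "N ((gi ** b ** g - mat 1)$1$2) = 1 / real p ^ 2" "N ((gi ** b ** g - mat 1)$2$1) = 1 / real p ^ 2"
    using exists_transverse_in_dense[OF g assms(4)] by blast
  define G where "G = subgroup_generated_SL2 {a, b}"
  have gi: "gi ** g = mat 1" using g matrix_left_right_inverse by blast
  have "(g ** mat2 mu 0 0 lam ** gi) ** a = mat 1"
    using lam(2) g unfolding a_diag conj_mult[OF gi] by (simp add: mat2_mult mat_1_eq_mat2[symmetric] mult.commute)
  hence "g ** mat2 mu 0 0 lam ** gi \<in> G"
    unfolding G_def by (rule subgroup_generated_SL2_inverse[rotated]) simp
  moreover have "g ** (gi ** b ** g) ** gi \<in> G" "g ** mat2 lam 0 0 mu ** gi \<in> G"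
    unfolding G_def conj_cancel[OF g] a_diag[symmetric] by (auto intro: subgroup_generated_SL2_gen)
  moreover have "1 / real p ^ 2 < 1 / real p" "0 < 1 / real p ^ 2"
    using p_gt_1 by (simp_all add: power2_eq_square divide_less_eq)
  ultimately have "SL2 \<subseteq> closure G"
    using SL2_subset_closure_if_hyperbolic_and_transverse[OF subgroup_generated_SL2_mult
        subgroup_generated_SL2_one g lam] b(2-4) unfolding G_def by blast
  thus ?thesis using a b(1) unfolding G_def by blast
qed

end
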